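(* Let $S=\{v_1,\ldots,v_n\}\subset\mathbb Z^n$ ($n\ge1$) be an orthogonal subset with $|V_\alpha|\ge2$ for all $\alpha$ and $\mathcal P_2=\mathcal Q_2$. Then the lattice generated by $S$ is not cubiquitous.
   Context: $\mathbb Z^n$ carries the standard dot product with standard basis $e_1,\ldots,e_n$. $S$ is orthogonal if $\langle v_\alpha,v_\alpha\rangle\ge1$ for all $\alpha$ and $\langle v_\alpha,v_\beta\rangle=0$ for $\alpha\ne\beta$. $V_\alpha=\{j:\langle v_\alpha,e_j\rangle\ne0\}$, $E_j=\{\alpha:\langle v_\alpha,e_j\rangle\ne0\}$, $\mathcal P_2=\{j:|E_j|=2\}$, and $\mathcal Q_2=\{i\in\mathcal P_2: |\langle v_u,e_i\rangle|\ge2 \text{ for some } u\in E_i\}$. A full-rank sublattice $\Lambda\subset\mathbb Z^n$ is cubiquitous if $\Lambda\cap(x+\{0,1\}^n)\ne\emptyset$ for every $x\in\mathbb Z^n$. *)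

theory Defs
  imports Main
begin

(* Vectors of Z^n are functions 'n => int on a finite index type 'n with CARD('n) = n.
   A family S = {v_alpha} of n vectors is a function v :: 'n => 'n => int,
   where v alpha j = <v_alpha, e_j>. *)

definition dotZ :: "('n::finite \<Rightarrow> int) \<Rightarrow> ('n \<Rightarrow> int) \<Rightarrow> int" where
  "dotZ x y = (\<Sum>j\<in>UNIV. x j * y j)"

definition orthogonal_family :: "('n::finite \<Rightarrow> 'n \<Rightarrow> int) \<Rightarrow> bool" where
  "orthogonal_family v \<longleftrightarrow>
     (\<forall>\<alpha>. dotZ (v \<alpha>) (v \<alpha>) \<ge> 1) \<and>
     (\<forall>\<alpha> \<beta>. \<alpha> \<noteq> \<beta> \<longrightarrow> dotZ (v \<alpha>) (v \<beta>) = 0)"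

definition Vset :: "('n::finite \<Rightarrow> 'n \<Rightarrow> int) \<Rightarrow> 'n \<Rightarrow> 'n set" where
  "Vset v \<alpha> = {j. v \<alpha> j \<noteq> 0}"

definition Eset :: "('n::finite \<Rightarrow> 'n \<Rightarrow> int) \<Rightarrow> 'n \<Rightarrow> 'n set" where
  "Eset v j = {\<alpha>. v \<alpha> j \<noteq> 0}"

definition P2 :: "('n::finite \<Rightarrow> 'n \<Rightarrow> int) \<Rightarrow> 'n set" where
  "P2 v = {j. card (Eset v j) = 2}"

definition Q2 :: "('n::finite \<Rightarrow> 'n \<Rightarrow> int) \<Rightarrow> 'n set" where
  "Q2 v = {i \<in> P2 v. \<exists>u\<in>Eset v i. \<bar>v u i\<bar> \<ge> 2}"

definition lattice_gen :: "('n::finite \<Rightarrow> 'n \<Rightarrow> int) \<Rightarrow> ('n \<Rightarrow> int) set" where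
  "lattice_gen v = {x. \<exists>c :: 'n \<Rightarrow> int. \<forall>j. x j = (\<Sum>\<alpha>\<in>UNIV. c \<alpha> * v \<alpha> j)}"

definition cubiquitous :: "('n::finite \<Rightarrow> int) set \<Rightarrow> bool" where
  "cubiquitous L \<longleftrightarrow> (\<forall>x :: 'n \<Rightarrow> int. \<exists>y\<in>L. \<forall>j. y j - x j \<in> {0, 1})"

end

theory Submission
  imports Defs Complex_Main "HOL-Library.FuncSet"
begin

(* Put m_alpha(x) = 2 <x, v_alpha> + (sum_j v_alpha j), twice the pairing of v_alpha with the centre
   of the cube x + [0,1]^n.  If y = (sum_alpha c_alpha v_alpha) lies in that cube, then u = 2y - (2x + 1)
   is a vector of signs with <u, v_alpha> = 2 c_alpha |v_alpha|^2 - m_alpha(x).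

   If some v_alpha has an entry of absolute value at least 2, then |v_alpha|^2 exceeds
   N = (sum_j |v_alpha j|) plus the gcd g of its entries.  Choosing x with N < m_alpha(x) <= N + 2g
   leaves no integer c_alpha with |2 c_alpha |v_alpha|^2 - m_alpha(x)| <= N, although |<u, v_alpha>| <= N.

   If all entries lie in {-1, 0, 1}, Bessel's inequality for the orthogonal v_alpha bounds
   (sum_alpha d_alpha(x)^2 / |v_alpha|^2) by n for every x, where d_alpha(x) is the distance from
   m_alpha(x) to the multiples of 2 |v_alpha|^2.  Averaged over a period box each summand is at
   least 1, and strictly larger once |v_alpha|^2 >= 3.  In the remaining case every v_alpha has
   exactly two entries, both +-1; three such vectors cannot share a column, so double counting
   gives a column j with |E_j| = 2, i.e. j in P_2 but not in Q_2. *)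

lemma dotZ_smult_left: "dotZ (\<lambda>j. q * x j) w = q * dotZ x w"
  unfolding dotZ_def by (simp add: sum_distrib_left mult.assoc)

lemma dotZ_fun_upd_left: "dotZ (x(j := a)) w = dotZ x w + (a - x j) * w j"
proof -
  have "dotZ (x(j := a)) w = (\<Sum>i\<in>UNIV. x i * w i + (if i = j then (a - x j) * w j else 0))"
    unfolding dotZ_def by (intro sum.cong) (auto simp: algebra_simps)
  then show ?thesis unfolding dotZ_def by (simp add: sum.distrib)
qed

lemma abs_dotZ_le_sum_abs:
  assumes "\<forall>j. \<bar>u j\<bar> = 1"
  shows "\<bar>dotZ u w\<bar> \<le> (\<Sum>j\<in>UNIV. \<bar>w j\<bar>)"
proof -
  have "\<bar>dotZ u w\<bar> \<le> (\<Sum>j\<in>UNIV. \<bar>u j * w j\<bar>)"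
    unfolding dotZ_def by (rule sum_abs)
  also have "\<dots> = (\<Sum>j\<in>UNIV. \<bar>w j\<bar>)"
    using assms by (simp add: abs_mult)
  finally show ?thesis .
qed

lemma dotZ_self_eq_card_support:
  assumes "\<forall>j. w j \<in> {-1, 0, 1}"
  shows "dotZ w w = int (card {j. w j \<noteq> 0})"
proof -
  have "w j * w j = (if w j \<noteq> 0 then 1 else 0)" for j
    using assms[rule_format, of j] by auto
  then have "dotZ w w = (\<Sum>j\<in>UNIV. if w j \<noteq> 0 then 1 else 0)"
    unfolding dotZ_def by simp
  also have "\<dots> = int (card {j. w j \<noteq> 0})"
    by (simp add: sum.If_cases)
  finally show ?thesis .
qed

lemma orthogonal_family_dotZ_self_pos:
  assumes "orthogonal_family v"
  shows "dotZ (v \<alpha>) (v \<alpha>) > 0"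
  using assms unfolding orthogonal_family_def by (metis zero_less_one order_less_le_trans)

lemma sum_orthogonal_coeff:
  fixes w :: "'a::finite \<Rightarrow> 'b::finite \<Rightarrow> 'r::comm_semiring_1"
  assumes "\<And>a b. a \<noteq> b \<Longrightarrow> (\<Sum>j\<in>UNIV. w a j * w b j) = 0"
  shows "(\<Sum>j\<in>UNIV. (\<Sum>a\<in>UNIV. c a * w a j) * w b j) = c b * (\<Sum>j\<in>UNIV. w b j * w b j)"
proof -
  have "(\<Sum>j\<in>UNIV. (\<Sum>a\<in>UNIV. c a * w a j) * w b j) = (\<Sum>a\<in>UNIV. c a * (\<Sum>j\<in>UNIV. w a j * w b j))"
    unfolding sum_distrib_right sum_distrib_left by (subst sum.swap) (simp add: mult.assoc)
  also have "\<dots> = (\<Sum>a\<in>UNIV. if a = b then c b * (\<Sum>j\<in>UNIV. w b j * w b j) else 0)"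
    using assms by (intro sum.cong) auto
  finally show ?thesis by simp
qed

lemma dotZ_lattice_gen_coeff:
  assumes orth: "orthogonal_family v" and y: "\<forall>j. y j = (\<Sum>\<alpha>\<in>UNIV. c \<alpha> * v \<alpha> j)"
  shows "dotZ y (v \<beta>) = c \<beta> * dotZ (v \<beta>) (v \<beta>)"
proof -
  have "dotZ y (v \<beta>) = (\<Sum>j\<in>UNIV. (\<Sum>\<alpha>\<in>UNIV. c \<alpha> * v \<alpha> j) * v \<beta> j)"
    unfolding dotZ_def using y by simp
  also have "\<dots> = c \<beta> * dotZ (v \<beta>) (v \<beta>)"
    using orth unfolding orthogonal_family_def dotZ_def by (intro sum_orthogonal_coeff) auto
  finally show ?thesis .
qed

(* twice the pairing of w with the centre x + (1/2, ..., 1/2) of the cube x + [0,1]^n *)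
definition centre_dotZ :: "('n::finite \<Rightarrow> int) \<Rightarrow> ('n \<Rightarrow> int) \<Rightarrow> int" where
  "centre_dotZ x w = dotZ (\<lambda>j. 2 * x j + 1) w"

lemma centre_dotZ_eq: "centre_dotZ x w = 2 * dotZ x w + (\<Sum>j\<in>UNIV. w j)"
  unfolding centre_dotZ_def dotZ_def by (simp add: sum.distrib sum_distrib_left algebra_simps)

lemma even_centre_dotZ_diff: "even (centre_dotZ x w - dotZ w w)"
proof -
  have "centre_dotZ x w - dotZ w w = 2 * dotZ x w - (\<Sum>j\<in>UNIV. w j * (w j - 1))"
    unfolding centre_dotZ_eq by (simp add: dotZ_def sum_subtractf algebra_simps)
  then show ?thesis by (simp add: dvd_sum)
qed

lemma centre_dotZ_fun_upd:
  "centre_dotZ (x(j := a)) w = centre_dotZ x w + 2 * (a - x j) * w j"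
  unfolding centre_dotZ_eq dotZ_fun_upd_left by (simp add: algebra_simps)

lemma cubiquitous_lattice_gen_signs:
  fixes v :: "'n::finite \<Rightarrow> 'n \<Rightarrow> int"
  assumes orth: "orthogonal_family v" and cub: "cubiquitous (lattice_gen v)"
  obtains c u where "\<forall>j. \<bar>u j\<bar> = 1"
    and "\<forall>\<alpha>. dotZ u (v \<alpha>) = 2 * c \<alpha> * dotZ (v \<alpha>) (v \<alpha>) - centre_dotZ x (v \<alpha>)"
proof -
  obtain y where "y \<in> lattice_gen v" and yx: "\<forall>j. y j - x j \<in> {0, 1}"
    using cub unfolding cubiquitous_def by blast
  then obtain c where c: "\<forall>j. y j = (\<Sum>\<alpha>\<in>UNIV. c \<alpha> * v \<alpha> j)"
    unfolding lattice_gen_def by blast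
  define u where "u j = 2 * y j - (2 * x j + 1)" for j
  have "\<bar>u j\<bar> = 1" for j using yx[rule_format, of j] unfolding u_def by auto
  moreover have "dotZ u (v \<alpha>) = 2 * c \<alpha> * dotZ (v \<alpha>) (v \<alpha>) - centre_dotZ x (v \<alpha>)" for \<alpha>
  proof -
    have "dotZ u (v \<alpha>) = 2 * dotZ y (v \<alpha>) - centre_dotZ x (v \<alpha>)"
      unfolding u_def centre_dotZ_def dotZ_def by (simp add: sum_subtractf sum_distrib_left algebra_simps)
    then show ?thesis using dotZ_lattice_gen_coeff[OF orth c] by simp
  qed
  ultimately show thesis using that by blast
qed

section \<open>A vector with an entry of absolute value at least 2\<close>

lemma sum_bezout_Gcd:
  fixes w :: "'a \<Rightarrow> int"
  assumes "finite A"
  shows "\<exists>c. (\<Sum>j\<in>A. c j * w j) = Gcd (w ` A)"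
  using assms
proof (induction A rule: finite_induct)
  case empty
  show ?case by simp
next
  case (insert a A)
  obtain c where c: "(\<Sum>j\<in>A. c j * w j) = Gcd (w ` A)"
    using insert.IH by blast
  obtain s t where st: "s * w a + t * Gcd (w ` A) = gcd (w a) (Gcd (w ` A))"
    using bezout_int by blast
  have "(\<Sum>j\<in>A. ((\<lambda>j. t * c j)(a := s)) j * w j) = t * (\<Sum>j\<in>A. c j * w j)"
    using insert.hyps by (auto simp: sum_distrib_left mult.assoc intro: sum.cong)
  then have "(\<Sum>j\<in>insert a A. ((\<lambda>j. t * c j)(a := s)) j * w j) = Gcd (w ` insert a A)"
    using insert.hyps c st by simp
  then show ?case by blast
qed

lemma dotZ_bezout:
  fixes w :: "'n::finite \<Rightarrow> int"
  obtains x where "dotZ x w = Gcd (range w)"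
  using sum_bezout_Gcd[of UNIV w] unfolding dotZ_def by auto

lemma Gcd_range_int_bounds:
  fixes w :: "'a \<Rightarrow> int"
  assumes "w j \<noteq> 0"
  shows "0 < Gcd (range w)" and "Gcd (range w) \<le> \<bar>w j\<bar>"
proof -
  have "Gcd (range w) \<noteq> 0" using assms by auto
  then show "0 < Gcd (range w)" using Gcd_int_greater_eq_0 order_le_neq_trans by metis
  have "\<bar>Gcd (range w)\<bar> \<le> \<bar>w j\<bar>" using assms by (intro dvd_imp_le_int) auto
  then show "Gcd (range w) \<le> \<bar>w j\<bar>" by simp
qed

lemma exists_centre_dotZ_in_interval:
  fixes w :: "'n::finite \<Rightarrow> int"
  assumes "w j0 \<noteq> 0"
  obtains x where "N < centre_dotZ x w" and "centre_dotZ x w \<le> N + 2 * Gcd (range w)"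
proof -
  define g where "g = Gcd (range w)"
  define S where "S = (\<Sum>j\<in>UNIV. w j)"
  have g: "g > 0" unfolding g_def using assms by (rule Gcd_range_int_bounds)
  obtain x0 where x0: "dotZ x0 w = g" using dotZ_bezout g_def by metis
  define q where "q = (N - S) div (2 * g) + 1"
  have "centre_dotZ (\<lambda>j. q * x0 j) w = 2 * g * q + S"
    unfolding centre_dotZ_eq dotZ_smult_left x0 S_def by simp
  moreover have "N - S = 2 * g * (q - 1) + (N - S) mod (2 * g)"
    unfolding q_def by simp
  moreover have "0 \<le> (N - S) mod (2 * g)" "(N - S) mod (2 * g) < 2 * g"
    using g by auto
  ultimately show thesis
    by (intro that[of "\<lambda>j. q * x0 j"]) (auto simp: g_def algebra_simps)
qed

lemma sum_abs_add_Gcd_less_dotZ_self: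
  fixes w :: "'n::finite \<Rightarrow> int"
  assumes two: "card {j. w j \<noteq> 0} \<ge> 2" and big: "\<bar>w j1\<bar> \<ge> 2"
  shows "(\<Sum>j\<in>UNIV. \<bar>w j\<bar>) + Gcd (range w) < dotZ w w"
proof -
  define g where "g = Gcd (range w)"
  define t where "t j = \<bar>w j\<bar> * (\<bar>w j\<bar> - 1)" for j
  have excess: "dotZ w w - (\<Sum>j\<in>UNIV. \<bar>w j\<bar>) = (\<Sum>j\<in>UNIV. t j)"
    unfolding dotZ_def t_def by (simp add: sum_subtractf algebra_simps abs_mult_self_eq)
  have t_nonneg: "t j \<ge> 0" for j
    unfolding t_def by (cases "w j = 0") auto
  have g: "0 < g" unfolding g_def using big by (intro Gcd_range_int_bounds(1)[of w j1]) auto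
  have "g < (\<Sum>j\<in>UNIV. t j)"
  proof (cases "g = 1")
    case True
    have "2 * 1 \<le> t j1" unfolding t_def using big by (intro mult_mono) auto
    also have "t j1 \<le> (\<Sum>j\<in>UNIV. t j)" by (rule member_le_sum) (use t_nonneg in auto)
    finally show ?thesis using True by simp
  next
    case False
    then have g2: "g \<ge> 2" using g by simp
    obtain a b where ab: "w a \<noteq> 0" "w b \<noteq> 0" "a \<noteq> b"
      using two by (auto simp: numeral_2_eq_2 card_le_Suc_iff)
    have tg: "g \<le> t j" if "w j \<noteq> 0" for j
    proof -
      have "g \<le> \<bar>w j\<bar>" unfolding g_def using that by (rule Gcd_range_int_bounds)
      then have "g * 1 \<le> \<bar>w j\<bar> * (\<bar>w j\<bar> - 1)" using g2 by (intro mult_mono) auto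
      then show ?thesis unfolding t_def by simp
    qed
    have "2 * g \<le> t a + t b" using tg[OF ab(1)] tg[OF ab(2)] by simp
    also have "\<dots> = (\<Sum>j\<in>{a, b}. t j)" using ab by simp
    also have "\<dots> \<le> (\<Sum>j\<in>UNIV. t j)" by (rule sum_mono2) (use t_nonneg in auto)
    finally show ?thesis using g by simp
  qed
  then show ?thesis using excess unfolding g_def by simp
qed

lemma large_entry_not_cubiquitous:
  fixes v :: "'n::finite \<Rightarrow> 'n \<Rightarrow> int"
  assumes orth: "orthogonal_family v" and two: "card (Vset v \<alpha>) \<ge> 2" and big: "\<bar>v \<alpha> j\<bar> \<ge> 2"
  shows "\<not> cubiquitous (lattice_gen v)"
proof
  assume cub: "cubiquitous (lattice_gen v)"
  define w where "w = v \<alpha>"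
  define k where "k = dotZ w w"
  define N where "N = (\<Sum>j\<in>UNIV. \<bar>w j\<bar>)"
  define g where "g = Gcd (range w)"
  have gap: "N + g < k"
    unfolding N_def g_def k_def w_def using two big unfolding Vset_def
    by (rule sum_abs_add_Gcd_less_dotZ_self)
  have "N \<ge> 0" unfolding N_def by (simp add: sum_nonneg)
  then have "k > 0" using gap Gcd_int_greater_eq_0[of "range w"] unfolding g_def by linarith
  have "w j \<noteq> 0" using big unfolding w_def by auto
  then obtain x where m: "N < centre_dotZ x w" "centre_dotZ x w \<le> N + 2 * g"
    unfolding g_def by (rule exists_centre_dotZ_in_interval)
  obtain c u where "\<forall>j. \<bar>u j\<bar> = 1" and "dotZ u w = 2 * c \<alpha> * k - centre_dotZ x w"
    using cubiquitous_lattice_gen_signs[OF orth cub, of x] unfolding k_def w_def by metis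
  then have bound: "\<bar>2 * c \<alpha> * k - centre_dotZ x w\<bar> \<le> N"
    unfolding N_def by (metis abs_dotZ_le_sum_abs)
  show False
  proof (cases "c \<alpha> \<le> 0")
    case True
    then have "2 * c \<alpha> * k \<le> 0" using \<open>k > 0\<close> by (simp add: mult_nonpos_nonneg)
    then show False using bound m by linarith
  next
    case False
    then have "2 * c \<alpha> * k \<ge> 2 * k" using \<open>k > 0\<close> by simp
    then show False using bound m gap by linarith
  qed
qed

section \<open>Entries in {-1, 0, 1}: averaging against Bessel's inequality\<close>

definition sqdist_mult :: "int \<Rightarrow> int \<Rightarrow> int" where
  "sqdist_mult k m = (min (m mod (2 * k)) (2 * k - m mod (2 * k)))\<^sup>2"

lemma sqdist_mult_nonneg: "sqdist_mult k m \<ge> 0"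
  unfolding sqdist_mult_def by simp

lemma sqdist_mult_le:
  fixes k m c :: int
  assumes "k > 0"
  shows "sqdist_mult k m \<le> (2 * c * k - m)\<^sup>2"
proof -
  define r where "r = m mod (2 * k)"
  define q where "q = m div (2 * k)"
  have r: "0 \<le> r" "r < 2 * k" using assms unfolding r_def by auto
  have "m = 2 * k * q + r" unfolding r_def q_def by simp
  then have diff: "2 * c * k - m = 2 * k * (c - q) - r" by (simp add: algebra_simps)
  have "min r (2 * k - r) \<le> \<bar>2 * c * k - m\<bar>"
  proof (cases "c \<le> q")
    case True
    then have "2 * k * (c - q) \<le> 0" using assms by (simp add: mult_nonneg_nonpos)
    then show ?thesis using diff r by linarith
  next
    case False
    then have "2 * k * (c - q) \<ge> 2 * k" using assms by simp
    then show ?thesis using diff r by linarith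
  qed
  then have "(min r (2 * k - r))\<^sup>2 \<le> \<bar>2 * c * k - m\<bar>\<^sup>2" using r by (intro power_mono) auto
  then show ?thesis unfolding sqdist_mult_def r_def by simp
qed

lemma exists_progression_term_mod:
  fixes k s C t :: int
  assumes "k \<ge> 1" and s: "s = 1 \<or> s = -1" and "even (t - C)"
  obtains i where "i \<in> {0..<k}" and "(C + 2 * s * i) mod (2 * k) = t mod (2 * k)"
proof -
  obtain h where h: "t - C = 2 * h" using \<open>even (t - C)\<close> by (rule evenE)
  define i where "i = (s * h) mod k"
  define d where "d = (s * h) div k"
  have "i \<in> {0..<k}" unfolding i_def using \<open>k \<ge> 1\<close> by simp
  moreover have "(C + 2 * s * i) mod (2 * k) = t mod (2 * k)"
  proof -
    have i: "i = s * h - k * d" unfolding i_def d_def by (simp add: minus_div_mult_eq_mod[symmetric])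
    have "2 * s * i = 2 * (s * s) * h - 2 * k * (s * d)" by (subst i) (simp add: algebra_simps)
    also have "s * s = 1" using s by auto
    finally have "C + 2 * s * i = t + (2 * k) * (- s * d)" using h by (simp add: algebra_simps)
    then show ?thesis by (simp only: mod_mult_self2)
  qed
  ultimately show thesis using that by simp
qed

lemma sum_sqdist_mult_progression_ge:
  fixes k s C :: int
  assumes k: "k \<ge> 1" and s: "s = 1 \<or> s = -1" and "even (C - k)"
  shows "k\<^sup>2 + of_bool (k \<ge> 3) \<le> (\<Sum>i\<in>{0..<k}. sqdist_mult k (C + 2 * s * i))"
proof -
  let ?f = "\<lambda>i. sqdist_mult k (C + 2 * s * i)"
  have ev: "even (k - C)" "even (k + 2 - C)" using \<open>even (C - k)\<close> by presburger+
  obtain i0 where i0: "i0 \<in> {0..<k}" "(C + 2 * s * i0) mod (2 * k) = k mod (2 * k)"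
    using exists_progression_term_mod[OF k s ev(1)] by blast
  have "k mod (2 * k) = k" using k by simp
  then have f0: "?f i0 = k\<^sup>2" using i0 unfolding sqdist_mult_def by simp
  show ?thesis
  proof (cases "k \<ge> 3")
    case False
    have "?f i0 \<le> (\<Sum>i\<in>{0..<k}. ?f i)"
      by (rule member_le_sum) (use i0 sqdist_mult_nonneg in auto)
    then show ?thesis using False f0 by simp
  next
    case True
    obtain i1 where i1: "i1 \<in> {0..<k}" "(C + 2 * s * i1) mod (2 * k) = (k + 2) mod (2 * k)"
      using exists_progression_term_mod[OF k s ev(2)] by blast
    have "(k + 2) mod (2 * k) = k + 2" using True by simp
    then have f1: "?f i1 = (k - 2)\<^sup>2" using i1 True unfolding sqdist_mult_def by (simp add: min_def)
    have "i0 \<noteq> i1" using i0 i1 \<open>k mod (2 * k) = k\<close> \<open>(k + 2) mod (2 * k) = k + 2\<close> by auto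
    have "1 * 1 \<le> (k - 2) * (k - 2)" using True by (intro mult_mono) auto
    then have "k\<^sup>2 + 1 \<le> ?f i0 + ?f i1" using f0 f1 by (simp add: power2_eq_square)
    also have "\<dots> = (\<Sum>i\<in>{i0, i1}. ?f i)" using \<open>i0 \<noteq> i1\<close> by simp
    also have "\<dots> \<le> (\<Sum>i\<in>{0..<k}. ?f i)"
      by (rule sum_mono2) (use i0 i1 sqdist_mult_nonneg in auto)
    finally show ?thesis using True by simp
  qed
qed

lemma sum_box_shift_coordinate:
  fixes f :: "('n \<Rightarrow> int) \<Rightarrow> 'b::comm_monoid_add" and T :: int
  assumes "T > 0"
  defines "B \<equiv> PiE UNIV (\<lambda>_. {0..<T})"
  shows "(\<Sum>x\<in>B. f (x(j := (x j + i) mod T))) = (\<Sum>x\<in>B. f x)"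
proof (rule sum.reindex_bij_witness[where i="\<lambda>x. x(j := (x j - i) mod T)"])
  fix x assume "x \<in> B"
  then have "0 \<le> x j" "x j < T" unfolding B_def by (auto simp: PiE_iff)
  then show "(x(j := (x j + i) mod T))(j := ((x(j := (x j + i) mod T)) j - i) mod T) = x"
    and "(x(j := (x j - i) mod T))(j := ((x(j := (x j - i) mod T)) j + i) mod T) = x"
    by (auto simp: mod_diff_left_eq mod_add_left_eq)
  show "x(j := (x j + i) mod T) \<in> B" and "x(j := (x j - i) mod T) \<in> B"
    using \<open>x \<in> B\<close> assms(1) unfolding B_def by (auto simp: PiE_iff)
qed (simp add: fun_upd_def)

lemma sum_sqdist_mult_box_ge:
  fixes w :: "'n::finite \<Rightarrow> int" and T :: int
  assumes s: "w j = 1 \<or> w j = -1" and "dotZ w w dvd T" and T: "T > 0"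
  defines "k \<equiv> dotZ w w" and "B \<equiv> PiE UNIV (\<lambda>_. {0..<T})"
  shows "(k\<^sup>2 + of_bool (k \<ge> 3)) * int (card B) \<le> k * (\<Sum>x\<in>B. sqdist_mult k (centre_dotZ x w))"
proof -
  have "(w j)\<^sup>2 \<le> k" unfolding k_def dotZ_def power2_eq_square by (rule member_le_sum) auto
  then have k: "k \<ge> 1" using s by auto
  obtain q where q: "T = k * q" using \<open>dotZ w w dvd T\<close> unfolding k_def by blast
  define F where "F x = sqdist_mult k (centre_dotZ x w)" for x
  have shift: "F (x(j := (x j + i) mod T)) = sqdist_mult k (centre_dotZ x w + 2 * w j * i)" for i x
  proof -
    define d where "d = (x j + i) div T"
    have r: "(x j + i) mod T = x j + i - k * q * d"
      unfolding d_def q by (simp add: minus_div_mult_eq_mod[symmetric])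
    have "centre_dotZ (x(j := (x j + i) mod T)) w
        = (centre_dotZ x w + 2 * w j * i) + (2 * k) * (- w j * q * d)"
      unfolding centre_dotZ_fun_upd by (subst r) (simp add: algebra_simps)
    then show ?thesis by (simp only: F_def sqdist_mult_def mod_mult_self2)
  qed
  have "k * (\<Sum>x\<in>B. F x) = (\<Sum>i\<in>{0..<k}. \<Sum>x\<in>B. F (x(j := (x j + i) mod T)))"
    using k sum_box_shift_coordinate[OF T, of F] unfolding B_def by simp
  also have "\<dots> = (\<Sum>x\<in>B. \<Sum>i\<in>{0..<k}. sqdist_mult k (centre_dotZ x w + 2 * w j * i))"
    by (subst sum.swap) (simp add: shift)
  also have "\<dots> \<ge> (\<Sum>x\<in>B. k\<^sup>2 + of_bool (k \<ge> 3))"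
    using sum_sqdist_mult_progression_ge[OF k s] even_centre_dotZ_diff
    unfolding k_def by (intro sum_mono) blast
  finally show ?thesis unfolding F_def by (simp add: mult.commute)
qed

lemma mean_sqdist_mult_box_ge:
  fixes w :: "'n::finite \<Rightarrow> int" and T :: int
  assumes s: "w j = 1 \<or> w j = -1" and "dotZ w w dvd T" and T: "T > 0"
  defines "k \<equiv> dotZ w w" and "B \<equiv> PiE UNIV (\<lambda>_. {0..<T})"
  defines "S \<equiv> (\<Sum>x\<in>B. sqdist_mult k (centre_dotZ x w))"
  shows "real (card B) \<le> S / k" and "k \<ge> 3 \<Longrightarrow> real (card B) < S / k"
proof -
  have "(w j)\<^sup>2 \<le> k" unfolding k_def dotZ_def power2_eq_square by (rule member_le_sum) auto
  then have k: "k > 0" using s by auto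
  have "(\<lambda>_. 0) \<in> B" unfolding B_def using T by auto
  then have "card B > 0" unfolding B_def by (auto simp: card_gt_0_iff finite_PiE)
  have "(k\<^sup>2 + of_bool (k \<ge> 3)) * int (card B) \<le> k * S"
    unfolding S_def k_def B_def using assms(1-3) by (rule sum_sqdist_mult_box_ge)
  moreover have "(k\<^sup>2 + of_bool (k \<ge> 3)) * int (card B)
      = k * (k * int (card B)) + of_bool (k \<ge> 3) * int (card B)"
    by (simp add: power2_eq_square algebra_simps)
  ultimately have le: "k * (k * int (card B)) + of_bool (k \<ge> 3) * int (card B) \<le> k * S" by simp
  moreover have "0 \<le> of_bool (k \<ge> 3) * int (card B)" by simp
  ultimately have "k * (k * int (card B)) \<le> k * S" by linarith
  then have "k * int (card B) \<le> S" using k by (simp add: mult_le_cancel_left_pos)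
  then have "real_of_int k * real (card B) \<le> S" by (metis of_int_le_iff of_int_mult of_int_of_nat_eq)
  then show "real (card B) \<le> S / k" using k by (simp add: pos_le_divide_eq mult.commute)
  assume "k \<ge> 3"
  then have "k * (k * int (card B)) + int (card B) \<le> k * S" using le by simp
  then have "k * (k * int (card B)) < k * S" using \<open>card B > 0\<close> by linarith
  then have "k * int (card B) < S" using k by (simp add: mult_less_cancel_left_pos)
  then have "real_of_int k * real (card B) < S" by (metis of_int_less_iff of_int_mult of_int_of_nat_eq)
  then show "real (card B) < S / k" using k by (simp add: pos_less_divide_eq mult.commute)
qed

lemma bessel_inequality:
  fixes w :: "'a::finite \<Rightarrow> 'b::finite \<Rightarrow> real" and u :: "'b \<Rightarrow> real"
  assumes orth: "\<And>a b. a \<noteq> b \<Longrightarrow> (\<Sum>j\<in>UNIV. w a j * w b j) = 0"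
    and nonzero: "\<And>a. (\<Sum>j\<in>UNIV. w a j * w a j) \<noteq> 0"
  shows "(\<Sum>a\<in>UNIV. (\<Sum>j\<in>UNIV. u j * w a j)\<^sup>2 / (\<Sum>j\<in>UNIV. w a j * w a j)) \<le> (\<Sum>j\<in>UNIV. (u j)\<^sup>2)"
proof -
  define K where "K a = (\<Sum>j\<in>UNIV. w a j * w a j)" for a
  define p where "p a = (\<Sum>j\<in>UNIV. u j * w a j)" for a
  define t where "t a = p a / K a" for a
  define P where "P j = (\<Sum>a\<in>UNIV. t a * w a j)" for j
  have P_coeff: "(\<Sum>j\<in>UNIV. P j * w a j) = p a" for a
    using sum_orthogonal_coeff[of w t a, OF orth] nonzero[of a]
    unfolding P_def t_def K_def by simp
  have uP: "(\<Sum>j\<in>UNIV. u j * P j) = (\<Sum>a\<in>UNIV. t a * p a)"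
    unfolding P_def p_def sum_distrib_left by (subst sum.swap) (simp add: algebra_simps)
  have PP: "(\<Sum>j\<in>UNIV. P j * P j) = (\<Sum>a\<in>UNIV. t a * p a)"
  proof -
    have "(\<Sum>j\<in>UNIV. P j * P j) = (\<Sum>a\<in>UNIV. t a * (\<Sum>j\<in>UNIV. P j * w a j))"
      unfolding P_def[of j for j] sum_distrib_left sum_distrib_right
      by (subst sum.swap) (simp add: algebra_simps)
    then show ?thesis using P_coeff by simp
  qed
  have "0 \<le> (\<Sum>j\<in>UNIV. (u j - P j)\<^sup>2)" by (simp add: sum_nonneg)
  also have "\<dots> = (\<Sum>j\<in>UNIV. (u j)\<^sup>2) - 2 * (\<Sum>j\<in>UNIV. u j * P j) + (\<Sum>j\<in>UNIV. P j * P j)"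
    by (simp add: power2_diff sum.distrib sum_subtractf sum_distrib_left mult.assoc) (simp add: power2_eq_square)
  finally have "(\<Sum>a\<in>UNIV. t a * p a) \<le> (\<Sum>j\<in>UNIV. (u j)\<^sup>2)" unfolding uP PP by simp
  moreover have "t a * p a = (p a)\<^sup>2 / K a" for a unfolding t_def by (simp add: power2_eq_square)
  ultimately show ?thesis unfolding p_def K_def by simp
qed

lemma cubiquitous_sum_sqdist_mult_le:
  fixes v :: "'n::finite \<Rightarrow> 'n \<Rightarrow> int"
  assumes orth: "orthogonal_family v" and cub: "cubiquitous (lattice_gen v)"
  shows "(\<Sum>\<alpha>\<in>UNIV. sqdist_mult (dotZ (v \<alpha>) (v \<alpha>)) (centre_dotZ x (v \<alpha>)) / dotZ (v \<alpha>) (v \<alpha>))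
    \<le> real (card (UNIV :: 'n set))"
proof -
  define k where "k \<alpha> = dotZ (v \<alpha>) (v \<alpha>)" for \<alpha>
  have k: "k \<alpha> > 0" for \<alpha> unfolding k_def using orth by (rule orthogonal_family_dotZ_self_pos)
  obtain c u where u: "\<forall>j. \<bar>u j\<bar> = 1"
    and cu: "\<forall>\<alpha>. dotZ u (v \<alpha>) = 2 * c \<alpha> * k \<alpha> - centre_dotZ x (v \<alpha>)"
    using cubiquitous_lattice_gen_signs[OF orth cub] unfolding k_def by metis
  define rv where "rv \<alpha> j = real_of_int (v \<alpha> j)" for \<alpha> j
  define ru where "ru j = real_of_int (u j)" for j
  have of_int_dotZ: "real_of_int (dotZ y (v \<alpha>)) = (\<Sum>j\<in>UNIV. real_of_int (y j) * rv \<alpha> j)" for y \<alpha>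
    unfolding dotZ_def rv_def by simp
  have "real_of_int (sqdist_mult (k \<alpha>) (centre_dotZ x (v \<alpha>))) / k \<alpha>
      \<le> (\<Sum>j\<in>UNIV. ru j * rv \<alpha> j)\<^sup>2 / (\<Sum>j\<in>UNIV. rv \<alpha> j * rv \<alpha> j)" for \<alpha>
  proof -
    have "sqdist_mult (k \<alpha>) (centre_dotZ x (v \<alpha>)) \<le> (dotZ u (v \<alpha>))\<^sup>2"
      using cu sqdist_mult_le[OF k] by simp
    then have "real_of_int (sqdist_mult (k \<alpha>) (centre_dotZ x (v \<alpha>))) \<le> (real_of_int (dotZ u (v \<alpha>)))\<^sup>2"
      by (simp flip: of_int_power)
    moreover have "(\<Sum>j\<in>UNIV. ru j * rv \<alpha> j) = dotZ u (v \<alpha>)"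
      unfolding ru_def of_int_dotZ ..
    moreover have "(\<Sum>j\<in>UNIV. rv \<alpha> j * rv \<alpha> j) = k \<alpha>"
      unfolding k_def of_int_dotZ rv_def ..
    ultimately show ?thesis using k[of \<alpha>] by (simp add: divide_right_mono)
  qed
  then have "(\<Sum>\<alpha>\<in>UNIV. real_of_int (sqdist_mult (k \<alpha>) (centre_dotZ x (v \<alpha>))) / k \<alpha>)
      \<le> (\<Sum>\<alpha>\<in>UNIV. (\<Sum>j\<in>UNIV. ru j * rv \<alpha> j)\<^sup>2 / (\<Sum>j\<in>UNIV. rv \<alpha> j * rv \<alpha> j))"
    by (rule sum_mono)
  also have "\<dots> \<le> (\<Sum>j\<in>UNIV. (ru j)\<^sup>2)"
  proof (rule bessel_inequality)
    show "(\<Sum>j\<in>UNIV. rv \<alpha> j * rv \<beta> j) = 0" if "\<alpha> \<noteq> \<beta>" for \<alpha> \<beta>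
      using orth that of_int_dotZ[of "v \<alpha>" \<beta>] unfolding orthogonal_family_def rv_def by simp
    show "(\<Sum>j\<in>UNIV. rv \<alpha> j * rv \<alpha> j) \<noteq> 0" for \<alpha>
      using k[of \<alpha>] of_int_dotZ[of "v \<alpha>" \<alpha>] unfolding k_def rv_def by simp
  qed
  also have "\<dots> = real (card (UNIV :: 'n set))"
  proof -
    have "(u j)\<^sup>2 = 1" for j using u by (metis power2_abs power_one)
    then have "(ru j)\<^sup>2 = 1" for j unfolding ru_def by (metis of_int_1 of_int_power)
    then show ?thesis by simp
  qed
  finally show ?thesis unfolding k_def .
qed

lemma unit_entries_not_cubiquitous:
  fixes v :: "'n::finite \<Rightarrow> 'n \<Rightarrow> int"
  assumes orth: "orthogonal_family v" and ent: "\<forall>\<alpha> j. v \<alpha> j \<in> {-1, 0, 1}"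
    and big: "dotZ (v \<alpha>0) (v \<alpha>0) \<ge> 3"
  shows "\<not> cubiquitous (lattice_gen v)"
proof
  assume cub: "cubiquitous (lattice_gen v)"
  define k where "k \<alpha> = dotZ (v \<alpha>) (v \<alpha>)" for \<alpha>
  define n where "n = real (card (UNIV :: 'n set))"
  define T where "T = (\<Prod>\<alpha>\<in>UNIV. k \<alpha>)"
  define B where "B = PiE (UNIV :: 'n set) (\<lambda>_. {0..<T})"
  define S where "S \<alpha> = (\<Sum>x\<in>B. sqdist_mult (k \<alpha>) (centre_dotZ x (v \<alpha>)))" for \<alpha>
  have k: "k \<alpha> > 0" for \<alpha> unfolding k_def using orth by (rule orthogonal_family_dotZ_self_pos)
  have T: "T > 0" unfolding T_def using k by (simp add: prod_pos)
  have mean: "real (card B) \<le> S \<alpha> / k \<alpha>" "k \<alpha> \<ge> 3 \<Longrightarrow> real (card B) < S \<alpha> / k \<alpha>" for \<alpha>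
  proof -
    obtain j where "v \<alpha> j \<noteq> 0"
      using k[of \<alpha>] unfolding k_def dotZ_def by fastforce
    then have "v \<alpha> j = 1 \<or> v \<alpha> j = -1" using ent by auto
    moreover have "dotZ (v \<alpha>) (v \<alpha>) dvd T" unfolding T_def k_def by (rule dvd_prodI) simp_all
    ultimately show "real (card B) \<le> S \<alpha> / k \<alpha>" "k \<alpha> \<ge> 3 \<Longrightarrow> real (card B) < S \<alpha> / k \<alpha>"
      unfolding S_def B_def k_def using mean_sqdist_mult_box_ge[OF _ _ T] by blast+
  qed
  have "n * card B = (\<Sum>\<alpha>\<in>(UNIV :: 'n set). real (card B))" unfolding n_def by simp
  also have "\<dots> < (\<Sum>\<alpha>\<in>UNIV. S \<alpha> / k \<alpha>)"
    using mean big unfolding k_def by (intro sum_strict_mono_ex1) auto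
  also have "\<dots> = (\<Sum>x\<in>B. \<Sum>\<alpha>\<in>UNIV. sqdist_mult (k \<alpha>) (centre_dotZ x (v \<alpha>)) / k \<alpha>)"
    unfolding S_def by (subst sum.swap) (simp add: sum_divide_distrib)
  also have "\<dots> \<le> (\<Sum>x\<in>B. n)"
    unfolding k_def n_def using cubiquitous_sum_sqdist_mult_le[OF orth cub] by (intro sum_mono)
  also have "\<dots> = n * card B" by simp
  finally show False by simp
qed

section \<open>Vectors with exactly two entries in {-1, 1}\<close>

lemma card_gt_2_obtain:
  assumes "2 < card A"
  obtains a b c where "a \<in> A" "b \<in> A" "c \<in> A" "a \<noteq> b" "a \<noteq> c" "b \<noteq> c"
proof -
  obtain a B where B: "A = insert a B" "a \<notin> B" "2 \<le> card B"
    using assms card_le_Suc_iff[of 2 A] by auto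
  then obtain b C where C: "B = insert b C" "b \<notin> C" "1 \<le> card C"
    using card_le_Suc_iff[of 1 B] by auto
  then obtain c where "c \<in> C" by fastforce
  then show thesis using B C that[of a b c] by blast
qed

lemma card_2_obtain_other:
  assumes "card A = 2" and "j \<in> A"
  obtains p where "A = {j, p}" and "p \<noteq> j"
proof -
  obtain x y where "A = {x, y}" and "x \<noteq> y" using assms(1) card_2_iff by metis
  then show thesis using assms(2) that by (metis insert_commute insertE singletonD)
qed

lemma three_pairwise_orthogonal_signs:
  fixes a1 a2 a3 b1 b2 b3 :: int
  assumes "a1 \<in> {1, -1}" "a2 \<in> {1, -1}" "a3 \<in> {1, -1}" "b1 \<in> {1, -1}" "b2 \<in> {1, -1}" "b3 \<in> {1, -1}"
  shows "a1 * a2 + b1 * b2 \<noteq> 0 \<or> a1 * a3 + b1 * b3 \<noteq> 0 \<or> a2 * a3 + b2 * b3 \<noteq> 0"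
  using assms by auto

lemma shared_column_same_support:
  fixes v :: "'n::finite \<Rightarrow> 'n \<Rightarrow> int"
  assumes orth: "orthogonal_family v" and ent: "\<forall>\<alpha> j. v \<alpha> j \<in> {-1, 0, 1}"
    and two: "card (Vset v \<beta>) = 2"
    and col: "\<alpha> \<in> Eset v j" "\<beta> \<in> Eset v j" "\<alpha> \<noteq> \<beta>"
    and supp: "Vset v \<alpha> = {j, p}" "p \<noteq> j"
  shows "Vset v \<beta> = {j, p}" and "v \<alpha> j * v \<beta> j + v \<alpha> p * v \<beta> p = 0"
proof -
  have "dotZ (v \<alpha>) (v \<beta>) = (\<Sum>i\<in>{j, p}. v \<alpha> i * v \<beta> i)"
    unfolding dotZ_def using supp(1) by (intro sum.mono_neutral_right) (auto simp: Vset_def)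
  moreover have "dotZ (v \<alpha>) (v \<beta>) = 0"
    using orth col(3) unfolding orthogonal_family_def by blast
  ultimately show orth_ab: "v \<alpha> j * v \<beta> j + v \<alpha> p * v \<beta> p = 0"
    using supp(2) by simp
  have "j \<in> Vset v \<beta>" using col(2) unfolding Eset_def Vset_def by simp
  with two obtain p' where p': "Vset v \<beta> = {j, p'}" by (rule card_2_obtain_other)
  have "v \<alpha> j * v \<beta> j \<noteq> 0" using col(1,2) unfolding Eset_def by simp
  then have "v \<beta> p \<noteq> 0" using orth_ab by auto
  then have "p \<in> {j, p'}" using p' unfolding Vset_def by blast
  then show "Vset v \<beta> = {j, p}" using p' supp(2) by blast
qed

lemma card_Eset_le_2:
  fixes v :: "'n::finite \<Rightarrow> 'n \<Rightarrow> int"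
  assumes orth: "orthogonal_family v" and ent: "\<forall>\<alpha> j. v \<alpha> j \<in> {-1, 0, 1}"
    and two: "\<forall>\<alpha>. card (Vset v \<alpha>) = 2"
  shows "card (Eset v j) \<le> 2"
proof (rule ccontr)
  assume "\<not> card (Eset v j) \<le> 2"
  then have "2 < card (Eset v j)" by simp
  then obtain a b c where abc: "a \<in> Eset v j" "b \<in> Eset v j" "c \<in> Eset v j"
    and distinct: "a \<noteq> b" "a \<noteq> c" "b \<noteq> c"
    by (rule card_gt_2_obtain)
  have "j \<in> Vset v a" using abc(1) unfolding Eset_def Vset_def by simp
  with two[rule_format] obtain p where p: "Vset v a = {j, p}" "p \<noteq> j"
    by (rule card_2_obtain_other)
  note shared = shared_column_same_support[OF orth ent two[rule_format]]
  have b: "Vset v b = {j, p}" "v a j * v b j + v a p * v b p = 0"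
    using shared[OF abc(1,2) distinct(1) p] by simp_all
  have c: "Vset v c = {j, p}" "v a j * v c j + v a p * v c p = 0"
    using shared[OF abc(1,3) distinct(2) p] by simp_all
  have bc: "v b j * v c j + v b p * v c p = 0"
    using shared[OF abc(2,3) distinct(3) b(1) p(2)] by simp
  have sign: "v \<beta> j \<in> {1, -1}" "v \<beta> p \<in> {1, -1}" if "Vset v \<beta> = {j, p}" for \<beta>
    using ent that unfolding Vset_def by blast+
  show False
    using three_pairwise_orthogonal_signs[OF sign(1)[OF p(1)] sign(1)[OF b(1)] sign(1)[OF c(1)]
        sign(2)[OF p(1)] sign(2)[OF b(1)] sign(2)[OF c(1)]] b(2) c(2) bc
    by simp
qed

lemma sum_card_Eset_eq_sum_card_Vset:
  fixes v :: "'n::finite \<Rightarrow> 'n \<Rightarrow> int"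
  shows "(\<Sum>j\<in>UNIV. card (Eset v j)) = (\<Sum>\<alpha>\<in>UNIV. card (Vset v \<alpha>))"
proof -
  have card_eq: "card {a. P a} = (\<Sum>a\<in>UNIV. if P a then 1 else 0)" for P :: "'n \<Rightarrow> bool"
    by (simp add: sum.If_cases)
  show ?thesis
    unfolding Eset_def Vset_def card_eq by (rule sum.swap)
qed

lemma exists_card_Eset_eq_2:
  fixes v :: "'n::finite \<Rightarrow> 'n \<Rightarrow> int"
  assumes orth: "orthogonal_family v" and ent: "\<forall>\<alpha> j. v \<alpha> j \<in> {-1, 0, 1}"
    and two: "\<forall>\<alpha>. card (Vset v \<alpha>) = 2"
  obtains j where "card (Eset v j) = 2"
proof (rule ccontr)
  assume "\<not> thesis"
  then have ne: "card (Eset v j) \<noteq> 2" for j using that by blast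
  have "card (Eset v j) \<le> 1" for j
    using card_Eset_le_2[OF orth ent two, of j] ne[of j] by linarith
  then have "(\<Sum>j\<in>UNIV. card (Eset v j)) \<le> card (UNIV :: 'n set)"
    using sum_mono[of UNIV "\<lambda>j. card (Eset v j)" "\<lambda>_. 1"] by simp
  moreover have "(\<Sum>j\<in>UNIV. card (Eset v j)) = 2 * card (UNIV :: 'n set)"
    using two by (simp add: sum_card_Eset_eq_sum_card_Vset)
  ultimately show False by simp
qed

theorem proposition4p3:
  fixes v :: "'n::finite \<Rightarrow> 'n \<Rightarrow> int"
  assumes "orthogonal_family v"
    and "\<forall>\<alpha>. card (Vset v \<alpha>) \<ge> 2"
    and "P2 v = Q2 v"
  shows "\<not> cubiquitous (lattice_gen v)"
proof (cases "\<forall>\<alpha> j. v \<alpha> j \<in> {-1, 0, 1}")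
  case False
  then obtain \<alpha> j where "v \<alpha> j \<notin> {-1, 0, 1}" by blast
  then have "\<bar>v \<alpha> j\<bar> \<ge> 2" by auto
  then show ?thesis using large_entry_not_cubiquitous assms(1,2) by blast
next
  case ent: True
  show ?thesis
  proof (cases "\<forall>\<alpha>. dotZ (v \<alpha>) (v \<alpha>) \<le> 2")
    case False
    then obtain \<alpha> where "\<not> dotZ (v \<alpha>) (v \<alpha>) \<le> 2" by blast
    then have "dotZ (v \<alpha>) (v \<alpha>) \<ge> 3" by linarith
    then show ?thesis using unit_entries_not_cubiquitous[OF assms(1) ent] by blast
  next
    case True
    have "card (Vset v \<alpha>) = 2" for \<alpha>
      using True[rule_format, of \<alpha>] assms(2)[rule_format, of \<alpha>] ent
        dotZ_self_eq_card_support[of "v \<alpha>", folded Vset_def] by simp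
    then obtain j where "card (Eset v j) = 2"
      using exists_card_Eset_eq_2[OF assms(1) ent] by blast
    then obtain u where "\<bar>v u j\<bar> \<ge> 2"
      using assms(3) unfolding P2_def Q2_def by blast
    moreover have "v u j \<in> {-1, 0, 1}" using ent by blast
    ultimately show ?thesis by auto
  qed
qed

end
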